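(* Let $G$ be a Lie group and $(\pi,V)$ a continuous representation of $G$ on a finite-dimensional real vector space $V$ equipped with an inner product. Let $F\subseteq G$ be a relatively compact symmetric subset ($F=F^{-1}$), and let $\rho:=\sup_{g\in F}\|\pi(g)\|$ (operator norm). Then $\delta^V_F\geq \rho^{-\dim(V)}$.
   Context: Let $\Lambda$ be Lebesgue measure on $V$. For a relatively compact $F\subseteq G$ and a relatively compact open neighbourhood $U$ of $0\in V$, $\delta^V_F(U):=\Lambda\big(\bigcap_{g\in F}\pi(g)(U)\big)/\Lambda(U)$. For a neighbourhood basis $\mathcal{V}$ of $0$ consisting of relatively compact symmetric ($U=-U$) open sets, $\delta^V_F(\mathcal{V}):=\liminf_{U\in\mathcal{V}}\delta^V_F(U)$, and $\delta^V_F$ is the supremum of $\delta^V_F(\mathcal{V})$ over all such neighbourhood bases. *)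

theory Defs
  imports "HOL-Analysis.Analysis" "HOL-Algebra.Group"
begin

text \<open>G: a Hausdorff, locally compact topological group (stand-in for a Lie group),
  given as a HOL-Algebra group together with a topology on its carrier.\<close>
definition lc_topological_group :: "('g, 'b) monoid_scheme \<Rightarrow> 'g topology \<Rightarrow> bool" where
  "lc_topological_group G T \<longleftrightarrow>
     group G \<and> topspace T = carrier G \<and>
     continuous_map (prod_topology T T) T (\<lambda>(x, y). x \<otimes>\<^bsub>G\<^esub> y) \<and>
     continuous_map T T (\<lambda>x. inv\<^bsub>G\<^esub> x) \<and>
     Hausdorff_space T \<and> locally_compact_space T"

definition continuous_rep ::
  "('g, 'b) monoid_scheme \<Rightarrow> 'g topology \<Rightarrow> ('g \<Rightarrow> 'v::euclidean_space \<Rightarrow> 'v) \<Rightarrow> bool" where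
  "continuous_rep G T \<pi> \<longleftrightarrow>
     (\<forall>g\<in>carrier G. linear (\<pi> g)) \<and>
     (\<forall>g\<in>carrier G. \<forall>h\<in>carrier G. \<pi> (g \<otimes>\<^bsub>G\<^esub> h) = \<pi> g \<circ> \<pi> h) \<and>
     \<pi> \<one>\<^bsub>G\<^esub> = id \<and>
     continuous_map (prod_topology T euclidean) euclidean (\<lambda>(g, v). \<pi> g v)"

definition Lambda :: "'v::euclidean_space set \<Rightarrow> ennreal" where
  "Lambda S = (INF A \<in> {A \<in> sets lebesgue. S \<subseteq> A}. emeasure lebesgue A)"

definition delta_U :: "('g \<Rightarrow> 'v::euclidean_space \<Rightarrow> 'v) \<Rightarrow> 'g set \<Rightarrow> 'v set \<Rightarrow> ennreal" where
  "delta_U \<pi> F U = Lambda (\<Inter>g\<in>F. \<pi> g ` U) / Lambda U"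

definition good_nbhd_basis :: "'v::euclidean_space set set \<Rightarrow> bool" where
  "good_nbhd_basis \<V> \<longleftrightarrow>
     (\<forall>U\<in>\<V>. open U \<and> 0 \<in> U \<and> compact (closure U) \<and> uminus ` U = U) \<and>
     (\<forall>W. open W \<and> 0 \<in> W \<longrightarrow> (\<exists>U\<in>\<V>. U \<subseteq> W))"

text \<open>liminf over the basis directed by reverse inclusion.\<close>
definition delta_basis :: "('g \<Rightarrow> 'v::euclidean_space \<Rightarrow> 'v) \<Rightarrow> 'g set \<Rightarrow> 'v set set \<Rightarrow> ennreal" where
  "delta_basis \<pi> F \<V> = (SUP U0\<in>\<V>. INF U\<in>{U \<in> \<V>. U \<subseteq> U0}. delta_U \<pi> F U)"

definition delta :: "('g \<Rightarrow> 'v::euclidean_space \<Rightarrow> 'v) \<Rightarrow> 'g set \<Rightarrow> ennreal" where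
  "delta \<pi> F = (SUP \<V>\<in>{\<V>. good_nbhd_basis \<V>}. delta_basis \<pi> F \<V>)"

end

theory Submission
  imports Defs
begin

text \<open>Symmetry of \<open>F\<close> means that each \<open>\<pi>(g)\<close>, \<open>g \<in> F\<close>, has an inverse \<open>\<pi>(g\<inverse>)\<close> of operator
  norm at most \<open>\<rho>\<close>; hence \<open>\<pi>(g)(B(0,r)) \<supseteq> B(0,r/\<rho>)\<close>. So the intersection over \<open>F\<close> contains
  \<open>B(0,r/\<rho>)\<close>, whose volume is \<open>\<rho>\<^sup>-\<^sup>n\<close> times that of \<open>B(0,r)\<close>. Since the balls around \<open>0\<close> form
  an admissible neighbourhood basis, \<open>\<delta>\<^sub>F \<ge> \<rho>\<^sup>-\<^sup>n\<close>. The relative compactness of \<open>F\<close> and the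
  continuity of \<open>\<pi>\<close> only serve to make \<open>\<rho>\<close> finite.\<close>

lemma Lambda_mono: "S \<subseteq> S' \<Longrightarrow> Lambda S \<le> Lambda S'"
  unfolding Lambda_def by (rule INF_mono) auto

lemma Lambda_eq_emeasure:
  assumes "S \<in> sets lebesgue"
  shows "Lambda S = emeasure lebesgue S"
  unfolding Lambda_def
proof (rule antisym)
  show "(INF A \<in> {A \<in> sets lebesgue. S \<subseteq> A}. emeasure lebesgue A) \<le> emeasure lebesgue S"
    using assms by (intro INF_lower) simp
  show "emeasure lebesgue S \<le> (INF A \<in> {A \<in> sets lebesgue. S \<subseteq> A}. emeasure lebesgue A)"
    by (rule INF_greatest) (use emeasure_mono in blast)
qed

lemma Lambda_UNIV: "Lambda (UNIV :: 'v::euclidean_space set) = \<infinity>"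
  by (simp add: Lambda_eq_emeasure)

lemma Lambda_ball:
  assumes "r \<ge> 0"
  shows "Lambda (ball (0::'v::euclidean_space) r) = ennreal (r ^ DIM('v) * measure lborel (ball (0::'v) 1))"
proof -
  have "Lambda (ball (0::'v) r) = ennreal (measure lborel (ball (0::'v) r))"
    using emeasure_lborel_ball_finite[of "0::'v" r]
    by (simp add: Lambda_eq_emeasure emeasure_eq_ennreal_measure)
  then show ?thesis
    using content_ball_conv_unit_ball[OF assms, of "0::'v"] by simp
qed

lemma Lambda_ball_ratio:
  assumes "0 \<le> s" "0 < r"
  shows "Lambda (ball (0::'v::euclidean_space) s) / Lambda (ball (0::'v) r) = ennreal ((s / r) ^ DIM('v))"
proof -
  have unit: "measure lborel (ball (0::'v) 1) > 0"
    by (rule content_ball_pos) simp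
  show ?thesis
    using assms unit
    by (simp add: Lambda_ball divide_ennreal power_divide)
qed

lemma delta_U_ball_ge:
  fixes \<pi> :: "'g \<Rightarrow> 'v::euclidean_space \<Rightarrow> 'v"
  assumes "0 \<le> s" "0 < r" "ball 0 s \<subseteq> (\<Inter>g\<in>F. \<pi> g ` ball 0 r)"
  shows "ennreal ((s / r) ^ DIM('v)) \<le> delta_U \<pi> F (ball 0 r)"
proof -
  have "ennreal ((s / r) ^ DIM('v)) = Lambda (ball (0::'v) s) / Lambda (ball (0::'v) r)"
    using Lambda_ball_ratio[OF assms(1,2), where 'v = 'v] by simp
  also have "\<dots> \<le> delta_U \<pi> F (ball 0 r)"
    unfolding delta_U_def by (intro divide_right_mono_ennreal Lambda_mono assms(3))
  finally show ?thesis .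
qed

lemma delta_U_empty_ball:
  fixes \<pi> :: "'g \<Rightarrow> 'v::euclidean_space \<Rightarrow> 'v"
  assumes "0 < r"
  shows "delta_U \<pi> {} (ball 0 r) = \<infinity>"
proof -
  have "Lambda (ball (0::'v) r) < \<infinity>"
    using assms by (simp add: Lambda_ball)
  then show ?thesis
    by (simp add: delta_U_def Lambda_UNIV ennreal_divide_eq_top_iff less_top)
qed

lemma good_nbhd_basis_balls: "good_nbhd_basis {ball (0::'v::euclidean_space) r | r. r > 0}"
  unfolding good_nbhd_basis_def
proof (intro conjI ballI allI impI)
  fix U :: "'v set"
  assume "U \<in> {ball 0 r | r. r > 0}"
  then obtain r where "r > 0" "U = ball 0 r"
    by auto
  then show "open U" "0 \<in> U" "compact (closure U)"
    by auto
  show "uminus ` U = U"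
    using \<open>U = ball 0 r\<close> by (auto intro: image_eqI[where x = "- _"])
next
  fix W :: "'v set"
  assume "open W \<and> 0 \<in> W"
  then obtain e where "e > 0" "ball 0 e \<subseteq> W"
    using open_contains_ball by blast
  then show "\<exists>U\<in>{ball 0 r | r. r > 0}. U \<subseteq> W"
    by blast
qed

lemma delta_ge_if_balls:
  fixes \<pi> :: "'g \<Rightarrow> 'v::euclidean_space \<Rightarrow> 'v"
  assumes "\<And>r. 0 < r \<Longrightarrow> c \<le> delta_U \<pi> F (ball 0 r)"
  shows "c \<le> delta \<pi> F"
proof -
  let ?\<V> = "{ball (0::'v) r | r. r > 0}"
  have "c \<le> (INF U\<in>{U \<in> ?\<V>. U \<subseteq> ball 0 1}. delta_U \<pi> F U)"
    using assms by (auto intro: INF_greatest)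
  also have "\<dots> \<le> delta_basis \<pi> F ?\<V>"
    unfolding delta_basis_def by (rule SUP_upper) auto
  also have "\<dots> \<le> delta \<pi> F"
    unfolding delta_def by (rule SUP_upper) (simp add: good_nbhd_basis_balls)
  finally show ?thesis .
qed

lemma onorm_le_if_unit_cball:
  fixes f :: "'a::{real_normed_vector, perfect_space} \<Rightarrow> 'b::real_normed_vector"
  assumes "linear f" "\<And>v. norm v \<le> 1 \<Longrightarrow> norm (f v) \<le> B"
  shows "onorm f \<le> B"
proof (rule onorm_le)
  fix x :: 'a
  show "norm (f x) \<le> B * norm x"
  proof (cases "x = 0")
    case True
    then show ?thesis
      using linear_0[OF assms(1)] by simp
  next
    case False
    have "norm (f (x /\<^sub>R norm x)) \<le> B"
      using False by (intro assms(2)) simp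
    then have "norm (f x) / norm x \<le> B"
      by (simp add: linear_scale[OF assms(1)] divide_inverse_commute)
    then show ?thesis
      using False by (simp add: pos_divide_le_eq)
  qed
qed

lemma ball_subset_image_if_right_inverse:
  fixes f :: "'a::real_normed_vector \<Rightarrow> 'b::real_normed_vector"
  assumes "bounded_linear h" "\<And>v. f (h v) = v" "onorm h \<le> \<rho>" "0 < \<rho>"
  shows "ball 0 (r / \<rho>) \<subseteq> f ` ball 0 r"
proof
  fix v :: 'b
  assume v: "v \<in> ball 0 (r / \<rho>)"
  have "norm (h v) \<le> onorm h * norm v"
    using onorm[OF assms(1)] .
  also have "\<dots> \<le> \<rho> * norm v"
    using assms(3) by (simp add: mult_right_mono)
  also have "\<dots> < r"
    using v assms(4) by (simp add: field_simps)
  finally show "v \<in> f ` ball 0 r"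
    using assms(2)[of v] by (metis image_eqI mem_ball_0)
qed

lemma continuous_rep_right_inverse:
  assumes "group G" "continuous_rep G T \<pi>" "g \<in> carrier G"
  shows "\<pi> g (\<pi> (inv\<^bsub>G\<^esub> g) v) = v"
proof -
  have "\<pi> g \<circ> \<pi> (inv\<^bsub>G\<^esub> g) = \<pi> (g \<otimes>\<^bsub>G\<^esub> inv\<^bsub>G\<^esub> g)"
    using assms by (simp add: continuous_rep_def group.inv_closed)
  also have "\<dots> = id"
    using assms by (simp add: continuous_rep_def group.r_inv)
  finally show ?thesis
    by (metis comp_apply id_apply)
qed

lemma continuous_rep_onorm_pos:
  fixes \<pi> :: "'g \<Rightarrow> 'v::euclidean_space \<Rightarrow> 'v"
  assumes "group G" "continuous_rep G T \<pi>" "g \<in> carrier G"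
  shows "0 < onorm (\<pi> g)"
proof -
  obtain b :: 'v where "b \<noteq> 0"
    using nonzero_Basis by blast
  then have "\<pi> g (\<pi> (inv\<^bsub>G\<^esub> g) b) \<noteq> 0"
    using continuous_rep_right_inverse[OF assms] by simp
  moreover have "bounded_linear (\<pi> g)"
    using assms(2,3) by (simp add: continuous_rep_def linear_conv_bounded_linear)
  ultimately show ?thesis
    using onorm_pos_lt by blast
qed

lemma continuous_rep_onorm_bdd_above:
  fixes \<pi> :: "'g \<Rightarrow> 'v::euclidean_space \<Rightarrow> 'v"
  assumes "continuous_rep G T \<pi>" "compactin T K" "K \<subseteq> carrier G"
  shows "bdd_above ((\<lambda>g. onorm (\<pi> g)) ` K)"
proof -
  have "compactin (prod_topology T euclidean) (K \<times> cball (0::'v) 1)"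
    using assms(2) by (simp add: compactin_Times)
  then have "compact ((\<lambda>(g, v). \<pi> g v) ` (K \<times> cball 0 1))"
    using assms(1) image_compactin unfolding continuous_rep_def by fastforce
  then obtain B where "\<forall>y \<in> (\<lambda>(g, v). \<pi> g v) ` (K \<times> cball 0 1). norm y \<le> B"
    using compact_imp_bounded bounded_iff by blast
  then have B: "\<And>g v. g \<in> K \<Longrightarrow> norm v \<le> 1 \<Longrightarrow> norm (\<pi> g v) \<le> B"
    by fastforce
  have "onorm (\<pi> g) \<le> B" if "g \<in> K" for g
    using that assms(1,3) B by (intro onorm_le_if_unit_cball) (auto simp: continuous_rep_def)
  then show ?thesis
    by (intro bdd_aboveI[where M = B]) auto
qed

lemma continuous_rep_onorm_bdd_above_relatively_compact:
  fixes \<pi> :: "'g \<Rightarrow> 'v::euclidean_space \<Rightarrow> 'v"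
  assumes "continuous_rep G T \<pi>" "topspace T = carrier G" "F \<subseteq> carrier G" "compactin T (T closure_of F)"
  shows "bdd_above ((\<lambda>g. onorm (\<pi> g)) ` F)"
proof -
  have "bdd_above ((\<lambda>g. onorm (\<pi> g)) ` (T closure_of F))"
    using closure_of_subset_topspace[of T F] assms(2)
    by (intro continuous_rep_onorm_bdd_above[OF assms(1,4)]) simp
  moreover have "F \<subseteq> T closure_of F"
    using assms(2,3) by (simp add: closure_of_subset)
  ultimately show ?thesis
    by (meson bdd_above_mono image_mono)
qed

lemma ball_subset_Inter_rep_image:
  assumes "group G" "continuous_rep G T \<pi>" "F \<subseteq> carrier G" "(\<lambda>g. inv\<^bsub>G\<^esub> g) ` F = F"
    and "\<And>g. g \<in> F \<Longrightarrow> onorm (\<pi> g) \<le> \<rho>" "0 < \<rho>"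
  shows "ball 0 (r / \<rho>) \<subseteq> (\<Inter>g\<in>F. \<pi> g ` ball 0 r)"
proof (intro INT_greatest)
  fix g
  assume g: "g \<in> F"
  show "ball 0 (r / \<rho>) \<subseteq> \<pi> g ` ball 0 r"
  proof (rule ball_subset_image_if_right_inverse[where h = "\<pi> (inv\<^bsub>G\<^esub> g)"])
    have "inv\<^bsub>G\<^esub> g \<in> F"
      using g assms(4) by blast
    then show "bounded_linear (\<pi> (inv\<^bsub>G\<^esub> g))" "onorm (\<pi> (inv\<^bsub>G\<^esub> g)) \<le> \<rho>"
      using assms(2,3,5) by (auto simp: continuous_rep_def linear_conv_bounded_linear)
    show "\<pi> g (\<pi> (inv\<^bsub>G\<^esub> g) v) = v" for v
      using g assms(3) by (intro continuous_rep_right_inverse[OF assms(1,2)]) blast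
  qed (fact assms(6))
qed

theorem mainTheorem2:
  fixes G :: "('g, 'b) monoid_scheme" and T :: "'g topology"
    and \<pi> :: "'g \<Rightarrow> 'v::euclidean_space \<Rightarrow> 'v" and F :: "'g set"
  assumes "lc_topological_group G T"
    and "continuous_rep G T \<pi>"
    and "F \<subseteq> carrier G"
    and "compactin T (T closure_of F)"
    and "(\<lambda>g. inv\<^bsub>G\<^esub> g) ` F = F"
  shows "delta \<pi> F \<ge> ennreal (1 / ((SUP g\<in>F. onorm (\<pi> g)) ^ DIM('v)))"
proof (cases "F = {}")
  case True
  \<comment> \<open>Every ratio is \<open>\<infinity>\<close>, whatever junk value the empty supremum takes.\<close>
  then show ?thesis
    by (intro delta_ge_if_balls) (simp add: delta_U_empty_ball)
next
  case False
  define \<rho> where "\<rho> = (SUP g\<in>F. onorm (\<pi> g))"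
  have G: "group G" and carrier: "topspace T = carrier G"
    using assms(1) by (auto simp: lc_topological_group_def)
  have le_\<rho>: "onorm (\<pi> g) \<le> \<rho>" if "g \<in> F" for g
    unfolding \<rho>_def using that continuous_rep_onorm_bdd_above_relatively_compact[OF assms(2) carrier assms(3,4)]
    by (rule cSUP_upper)
  obtain g\<^sub>0 where g\<^sub>0: "g\<^sub>0 \<in> F"
    using False by blast
  then have \<rho>_pos: "0 < \<rho>"
    using le_\<rho>[OF g\<^sub>0] continuous_rep_onorm_pos[OF G assms(2), of g\<^sub>0] assms(3)
    by (meson less_le_trans subsetD)
  have "ennreal (((r / \<rho>) / r) ^ DIM('v)) \<le> delta_U \<pi> F (ball 0 r)" if "0 < r" for r
    using that \<rho>_pos ball_subset_Inter_rep_image[OF G assms(2,3,5) le_\<rho> \<rho>_pos]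
    by (intro delta_U_ball_ge) auto
  then show ?thesis
    unfolding \<rho>_def[symmetric] by (intro delta_ge_if_balls) (simp add: power_one_over)
qed

end
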